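(* Let $K$ be an algebraically closed field of positive characteristic and $G=\mathrm{SL}_2(K)$. For all non-negative integers $\lambda,\mu,\nu$, $\dim\mathrm{Hom}_{G}(L(\lambda),L(\mu)\otimes L(\nu))\le 1$.
   Context: Dominant weights of $\mathrm{SL}_2(K)$ are identified with non-negative integers; $L(\lambda)$ is the simple rational module with highest weight $\lambda$. *)

theory Defs
  imports "HOL-Computational_Algebra.Polynomial"
begin

text \<open>Elements of SL_2(K) are quadruples (a,b,c,d) standing for the matrix [[a,b],[c,d]].
  Modules are spaces of K-valued functions; G acts by right translation of the
  argument by the matrix (row vector times matrix).\<close>

definition alg_closed :: "'k::field itself \<Rightarrow> bool" where
  "alg_closed _ \<longleftrightarrow> (\<forall>p::'k poly. degree p > 0 \<longrightarrow> (\<exists>x. poly p x = 0))"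

definition pos_char :: "'k::field itself \<Rightarrow> bool" where
  "pos_char _ \<longleftrightarrow> (\<exists>n::nat. n > 0 \<and> of_nat n = (0::'k))"

definition SL2 :: "('k::field \<times> 'k \<times> 'k \<times> 'k) set" where
  "SL2 = {(a,b,c,d). a * d - b * c = 1}"

definition vmul :: "'k::field \<times> 'k \<Rightarrow> 'k \<times> 'k \<times> 'k \<times> 'k \<Rightarrow> 'k \<times> 'k" where
  "vmul v g = (case v of (x,y) \<Rightarrow> case g of (a,b,c,d) \<Rightarrow> (x*a + y*c, x*b + y*d))"

definition act1 :: "'k::field \<times> 'k \<times> 'k \<times> 'k \<Rightarrow> ('k \<times> 'k \<Rightarrow> 'k) \<Rightarrow> ('k \<times> 'k \<Rightarrow> 'k)" where
  "act1 g f = (\<lambda>v. f (vmul v g))"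

definition act2 :: "'k::field \<times> 'k \<times> 'k \<times> 'k \<Rightarrow> (('k \<times> 'k) \<times> ('k \<times> 'k) \<Rightarrow> 'k)
    \<Rightarrow> (('k \<times> 'k) \<times> ('k \<times> 'k) \<Rightarrow> 'k)" where
  "act2 g F = (\<lambda>(v,w). F (vmul v g, vmul w g))"

definition kspan :: "('a \<Rightarrow> 'k::field) set \<Rightarrow> ('a \<Rightarrow> 'k) set" where
  "kspan S = {f. \<exists>T c. finite T \<and> T \<subseteq> S \<and> f = (\<lambda>z. \<Sum>h\<in>T. c h * h z)}"

text \<open>L(lambda): the G-submodule of the degree-lambda binary forms (= H^0(lambda))
  generated by the highest weight vector x^lambda; it is the simple socle of H^0(lambda).\<close>
definition Lmod :: "nat \<Rightarrow> ('k::field \<times> 'k \<Rightarrow> 'k) set" where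
  "Lmod n = kspan {act1 g (\<lambda>(x,y). x ^ n) | g. g \<in> SL2}"

definition Ltens :: "nat \<Rightarrow> nat \<Rightarrow> (('k::field \<times> 'k) \<times> ('k \<times> 'k) \<Rightarrow> 'k) set" where
  "Ltens m n = kspan {(\<lambda>(v,w). f v * h w) | f h. f \<in> Lmod m \<and> h \<in> Lmod n}"

text \<open>Hom_G(L(lambda), L(mu) \<otimes> L(nu)), maps considered on L(lambda)\<close>
definition HomG :: "nat \<Rightarrow> nat \<Rightarrow> nat \<Rightarrow>
    (('k::field \<times> 'k \<Rightarrow> 'k) \<Rightarrow> (('k \<times> 'k) \<times> ('k \<times> 'k) \<Rightarrow> 'k)) set" where
  "HomG l m n = {\<phi>. (\<forall>f\<in>Lmod l. \<phi> f \<in> Ltens m n)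
     \<and> (\<forall>f\<in>Lmod l. \<forall>h\<in>Lmod l. \<phi> (\<lambda>z. f z + h z) = (\<lambda>z. \<phi> f z + \<phi> h z))
     \<and> (\<forall>f\<in>Lmod l. \<forall>c. \<phi> (\<lambda>z. c * f z) = (\<lambda>z. c * \<phi> f z))
     \<and> (\<forall>g\<in>SL2. \<forall>f\<in>Lmod l. \<phi> (act1 g f) = act2 g (\<phi> f))}"

end

theory Submission
  imports Defs
begin

text \<open>Evaluating a \<open>G\<close>-map \<open>\<phi> : L(\<lambda>) \<rightarrow> L(\<mu>) \<otimes> L(\<nu>)\<close> at the pair of basis vectors
  \<open>(e\<^sub>1, e\<^sub>2)\<close> gives a linear functional on \<open>L(\<lambda>)\<close> that is a torus eigenvector of weight
  \<open>\<mu> - \<nu>\<close>. It therefore kills every monomial \<open>x\<^bsup>\<lambda>-j\<^esup> y\<^bsup>j\<^esup>\<close> of another weight and is a multiple of the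
  single coefficient of weight \<open>\<mu> - \<nu>\<close>. Conversely \<open>\<phi>\<close> is determined by this functional: by
  equivariance and bihomogeneity, \<open>\<phi> f\<close> at a pair \<open>(v, w)\<close> with \<open>det(v, w) \<noteq> 0\<close> is
  \<open>det(v, w)\<^bsup>\<nu>\<^esup>\<close> times the functional applied to a translate of \<open>f\<close>, and such pairs are Zariski
  dense because \<open>K\<close> is infinite.\<close>

section \<open>Linear spans and infinite fields\<close>

lemma kspan_zero: "(\<lambda>z. 0) \<in> kspan S"
  unfolding kspan_def by (rule CollectI, rule exI[of _ "{}"]) auto

lemma kspan_base: "s \<in> S \<Longrightarrow> s \<in> kspan S"
  unfolding kspan_def by (rule CollectI, rule exI[of _ "{s}"], rule exI[of _ "\<lambda>_. 1"]) auto

lemma kspan_smult: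
  assumes "f \<in> kspan S"
  shows "(\<lambda>z. c * f z) \<in> kspan S"
proof -
  obtain T a where T: "finite T" "T \<subseteq> S" "f = (\<lambda>z. \<Sum>h\<in>T. a h * h z)"
    using assms unfolding kspan_def by blast
  show ?thesis unfolding kspan_def
    by (rule CollectI, rule exI[of _ T], rule exI[of _ "\<lambda>h. c * a h"])
       (simp add: T sum_distrib_left mult.assoc)
qed

lemma kspan_add:
  assumes "f \<in> kspan S" "g \<in> kspan S"
  shows "(\<lambda>z. f z + g z) \<in> kspan S"
proof -
  obtain T a T' b where T: "finite T" "T \<subseteq> S" "f = (\<lambda>z. \<Sum>h\<in>T. a h * h z)"
    and T': "finite T'" "T' \<subseteq> S" "g = (\<lambda>z. \<Sum>h\<in>T'. b h * h z)"
    using assms unfolding kspan_def by blast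
  have extend: "(\<Sum>h\<in>U. c h * h z) = (\<Sum>h\<in>T \<union> T'. (if h \<in> U then c h else 0) * h z)"
    if "U \<subseteq> T \<union> T'" for U c z
    by (rule sum.mono_neutral_cong_left) (use T T' that in auto)
  have "(\<lambda>z. f z + g z) =
      (\<lambda>z. \<Sum>h\<in>T \<union> T'. ((if h \<in> T then a h else 0) + (if h \<in> T' then b h else 0)) * h z)"
  proof
    fix z
    show "f z + g z =
        (\<Sum>h\<in>T \<union> T'. ((if h \<in> T then a h else 0) + (if h \<in> T' then b h else 0)) * h z)"
      unfolding T(3) T'(3) extend[of T a z, OF Un_upper1] extend[of T' b z, OF Un_upper2]
      by (simp only: sum.distrib distrib_right)
  qed
  moreover have "finite (T \<union> T')" "T \<union> T' \<subseteq> S"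
    using T T' by auto
  ultimately show ?thesis
    unfolding kspan_def by (intro CollectI exI conjI)
qed

lemma kspan_induct [consumes 1, case_names zero step]:
  assumes "f \<in> kspan S"
    and "P (\<lambda>z. 0)"
    and "\<And>s c g. s \<in> S \<Longrightarrow> P g \<Longrightarrow> P (\<lambda>z. c * s z + g z)"
  shows "P f"
proof -
  obtain T a where T: "finite T" "T \<subseteq> S" "f = (\<lambda>z. \<Sum>h\<in>T. a h * h z)"
    using assms(1) unfolding kspan_def by blast
  have "P (\<lambda>z. \<Sum>h\<in>U. a h * h z)" if "finite U" "U \<subseteq> S" for U
    using that by (induction U rule: finite_induct) (simp_all add: assms(2,3))
  then show ?thesis using T by simp
qed

lemma kspan_comp:
  assumes "f \<in> kspan S" and "\<And>s. s \<in> S \<Longrightarrow> (\<lambda>z. s (\<alpha> z)) \<in> kspan S'"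
  shows "(\<lambda>z. f (\<alpha> z)) \<in> kspan S'"
  using assms(1)
proof (induction rule: kspan_induct)
  case zero
  show ?case by (rule kspan_zero)
next
  case (step s c g)
  show ?case by (rule kspan_add[OF kspan_smult[OF assms(2)[OF step(1)]] step(2)])
qed

lemma infinite_UNIV_if_alg_closed:
  assumes "alg_closed TYPE('k::field)"
  shows "infinite (UNIV :: 'k set)"
proof
  assume fin: "finite (UNIV :: 'k set)"
  define q :: "'k poly" where "q = (\<Prod>a\<in>UNIV. [:-a, 1:])"
  have "degree q = card (UNIV :: 'k set)"
    unfolding q_def by (subst degree_prod_sum_eq) auto
  moreover have "card (UNIV :: 'k set) > 0"
    using fin by (simp add: card_gt_0_iff)
  ultimately have "degree (q + 1) > 0"
    by (metis degree_1 degree_add_eq_left)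
  then obtain x where "poly (q + 1) x = 0"
    using assms unfolding alg_closed_def by blast
  moreover have "poly q x = 0"
    unfolding q_def poly_prod by (rule prod_zero) (use fin in auto)
  ultimately show False by simp
qed

lemma ex_nonzero_power_neq:
  assumes "infinite (UNIV :: 'k::field set)" "i \<noteq> j"
  shows "\<exists>s::'k. s \<noteq> 0 \<and> s ^ i \<noteq> s ^ j"
proof -
  define p :: "'k poly" where "p = monom 1 i - monom 1 j"
  have "coeff p i = 1"
    using assms(2) unfolding p_def by (simp add: coeff_monom)
  then have "p \<noteq> 0" by auto
  then have "finite (insert 0 {x. poly p x = 0})"
    using poly_roots_finite by auto
  then obtain s where "s \<notin> insert 0 {x. poly p x = 0}"
    using ex_new_if_finite assms(1) by blast
  then show ?thesis
    unfolding p_def by (auto simp: poly_monom)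
qed

section \<open>The modules \<open>L(l)\<close> and \<open>L(m) \<otimes> L(n)\<close>\<close>

definition mat_mult :: "'k::field \<times> 'k \<times> 'k \<times> 'k \<Rightarrow> 'k \<times> 'k \<times> 'k \<times> 'k \<Rightarrow> 'k \<times> 'k \<times> 'k \<times> 'k"
  where "mat_mult g h = (case g of (a, b, c, d) \<Rightarrow> case h of (a', b', c', d') \<Rightarrow>
     (a * a' + b * c', a * b' + b * d', c * a' + d * c', c * b' + d * d'))"

lemma vmul_vmul: "vmul (vmul v g) h = vmul v (mat_mult g h)"
  by (cases v; cases g; cases h) (simp add: vmul_def mat_mult_def algebra_simps)

lemma SL2_mat_mult:
  assumes "g \<in> SL2" "h \<in> SL2"
  shows "mat_mult g h \<in> SL2"
proof -
  obtain a b c d a' b' c' d' where gh: "g = (a, b, c, d)" "h = (a', b', c', d')"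
    by (cases g, cases h) auto
  have det: "a * d - b * c = 1" "a' * d' - b' * c' = 1"
    using assms by (auto simp: gh SL2_def)
  have "(a * a' + b * c') * (c * b' + d * d') - (a * b' + b * d') * (c * a' + d * c')
      = (a * d - b * c) * (a' * d' - b' * c')"
    by (simp add: algebra_simps)
  then show ?thesis
    using det by (simp add: gh mat_mult_def SL2_def)
qed

lemma act1_highest_weight_vector:
  "act1 (a, b, c, d) (\<lambda>(x, y). x ^ l) = (\<lambda>v. (fst v * a + snd v * c) ^ l)"
  by (auto simp: act1_def vmul_def split: prod.splits)

lemma Lmod_act1:
  fixes f :: "'k::field \<times> 'k \<Rightarrow> 'k"
  assumes "g \<in> SL2" "f \<in> Lmod l"
  shows "act1 g f \<in> Lmod l"
proof -
  have "(\<lambda>v. f (vmul v g)) \<in> Lmod l"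
    using assms(2) unfolding Lmod_def
  proof (rule kspan_comp)
    fix s assume "s \<in> {act1 g (\<lambda>(x, y). x ^ l) |g. g \<in> (SL2 :: ('k \<times> _) set)}"
    then obtain g' where g': "g' \<in> SL2" "s = act1 g' (\<lambda>(x, y). x ^ l)" by blast
    then have "(\<lambda>v. s (vmul v g)) = act1 (mat_mult g g') (\<lambda>(x, y). x ^ l)"
      unfolding act1_def by (simp add: vmul_vmul)
    moreover have "mat_mult g g' \<in> SL2"
      using SL2_mat_mult assms(1) g'(1) by blast
    ultimately show "(\<lambda>v. s (vmul v g)) \<in> kspan {act1 g (\<lambda>(x, y). x ^ l) |g. g \<in> SL2}"
      by (intro kspan_base) blast
  qed
  then show ?thesis unfolding act1_def .
qed

lemma Lmod_zero: "(\<lambda>z. 0) \<in> Lmod l"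
  unfolding Lmod_def by (rule kspan_zero)

lemma Lmod_add: "f \<in> Lmod l \<Longrightarrow> g \<in> Lmod l \<Longrightarrow> (\<lambda>z. f z + g z) \<in> Lmod l"
  unfolding Lmod_def by (rule kspan_add)

lemma Lmod_smult: "f \<in> Lmod l \<Longrightarrow> (\<lambda>z. c * f z) \<in> Lmod l"
  unfolding Lmod_def by (rule kspan_smult)

definition binary_form :: "nat \<Rightarrow> (nat \<Rightarrow> 'k::field) \<Rightarrow> 'k \<times> 'k \<Rightarrow> 'k" where
  "binary_form l a = (\<lambda>p. \<Sum>j\<le>l. a j * fst p ^ (l - j) * snd p ^ j)"

lemma binary_form_lincomb:
  "(\<lambda>z. c * binary_form l a z + binary_form l b z) = binary_form l (\<lambda>j. c * a j + b j)"
  by (simp add: binary_form_def fun_eq_iff sum_distrib_left sum.distrib algebra_simps)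

lemma binary_form_eq_0:
  assumes "\<forall>j\<le>l. a j = 0"
  shows "binary_form l a = (\<lambda>z. 0)"
  using assms by (simp add: binary_form_def fun_eq_iff)

lemma Lmod_binary_form:
  assumes "f \<in> Lmod l"
  shows "\<exists>a. f = binary_form l a"
  using assms unfolding Lmod_def
proof (induction rule: kspan_induct)
  case zero
  show ?case
    using binary_form_eq_0[of l "\<lambda>_. 0"] by metis
next
  case (step s c g)
  then obtain a b c' d where s: "s = act1 (a, b, c', d) (\<lambda>(x, y). x ^ l)"
    by auto
  define e where "e j = of_nat (l choose j) * c' ^ j * a ^ (l - j)" for j
  have "s = binary_form l e"
  proof
    fix v
    show "s v = binary_form l e v"
      unfolding s act1_highest_weight_vector binary_form_def e_def
      by (subst add.commute, subst binomial_ring) (simp add: power_mult_distrib mult_ac)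
  qed
  moreover obtain b where "g = binary_form l b"
    using step(2) by blast
  ultimately have "(\<lambda>z. c * s z + g z) = binary_form l (\<lambda>j. c * e j + b j)"
    by (simp add: binary_form_lincomb)
  then show ?case by blast
qed

lemma Lmod_homogeneous:
  assumes "f \<in> Lmod l"
  shows "f (r * x, r * y) = r ^ l * f (x, y)"
  using assms unfolding Lmod_def
proof (induction rule: kspan_induct)
  case zero
  show ?case by simp
next
  case (step s c g)
  then obtain a b c' d where "s = act1 (a, b, c', d) (\<lambda>(x, y). x ^ l)"
    by auto
  then have "s (r * x, r * y) = r ^ l * s (x, y)"
    by (simp add: act1_highest_weight_vector power_mult_distrib[symmetric] algebra_simps)
  then show ?case
    using step(2) by (simp add: algebra_simps)
qed

lemma Ltens_bihomogeneous:
  assumes "F \<in> Ltens m n"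
  shows "F ((r * x1, r * x2), (q * y1, q * y2)) = r ^ m * q ^ n * F ((x1, x2), (y1, y2))"
  using assms unfolding Ltens_def
proof (induction rule: kspan_induct)
  case zero
  show ?case by simp
next
  case (step s c G)
  then obtain f h where "s = (\<lambda>(v, w). f v * h w)" "f \<in> Lmod m" "h \<in> Lmod n"
    by auto
  then have "s ((r * x1, r * x2), (q * y1, q * y2)) = r ^ m * q ^ n * s ((x1, x2), (y1, y2))"
    by (simp add: Lmod_homogeneous)
  then show ?case
    using step(2) by (simp add: algebra_simps)
qed

lemma Lmod_poly_on_line:
  assumes "f \<in> Lmod l"
  shows "\<exists>p. \<forall>t. f (x1 + t * u1, x2 + t * u2) = poly p t"
proof -
  obtain a where "f = binary_form l a"
    using Lmod_binary_form[OF assms] by blast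
  then show ?thesis
    by (intro exI[of _ "\<Sum>j\<le>l. smult (a j) ([:x1, u1:] ^ (l - j) * [:x2, u2:] ^ j)"])
       (simp add: binary_form_def poly_sum poly_power algebra_simps)
qed

lemma Ltens_poly_on_line:
  assumes "F \<in> Ltens m n"
  shows "\<exists>p. \<forall>t. F ((x1 + t * u1, x2 + t * u2), (y1 + t * w1, y2 + t * w2)) = poly p t"
  using assms unfolding Ltens_def
proof (induction rule: kspan_induct)
  case zero
  show ?case by (intro exI[of _ 0]) simp
next
  case (step s c G)
  then obtain f h where s: "s = (\<lambda>(v, w). f v * h w)" "f \<in> Lmod m" "h \<in> Lmod n"
    by auto
  obtain p where p: "\<forall>t. f (x1 + t * u1, x2 + t * u2) = poly p t"
    using Lmod_poly_on_line[OF s(2)] by blast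
  obtain q where q: "\<forall>t. h (y1 + t * w1, y2 + t * w2) = poly q t"
    using Lmod_poly_on_line[OF s(3)] by blast
  obtain r where r: "\<forall>t. G ((x1 + t * u1, x2 + t * u2), (y1 + t * w1, y2 + t * w2)) = poly r t"
    using step(2) by blast
  show ?case
    by (intro exI[of _ "smult c (p * q) + r"]) (simp add: s(1) p q r)
qed

lemma Ltens_eq_0_if_vanishes_on_bases:
  assumes "infinite (UNIV :: 'k::field set)"
    and F: "F \<in> (Ltens m n :: (('k \<times> 'k) \<times> ('k \<times> 'k) \<Rightarrow> 'k) set)"
    and vanish: "\<And>x1 x2 y1 y2. x1 * y2 - x2 * y1 \<noteq> 0 \<Longrightarrow> F ((x1, x2), (y1, y2)) = 0"
  shows "F = (\<lambda>_. 0)"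
proof
  fix z :: "('k \<times> 'k) \<times> ('k \<times> 'k)"
  obtain x1 x2 y1 y2 where z: "z = ((x1, x2), (y1, y2))"
    by (metis prod.collapse)
  obtain p where p: "\<forall>t. F ((x1 + t * 1, x2 + t * 0), (y1 + t * 0, y2 + t * 1)) = poly p t"
    using Ltens_poly_on_line[OF F] by blast
  define d :: "'k poly" where "d = [:x1 * y2 - x2 * y1, x1 + y2, 1:]"
  have d: "poly d t = (x1 + t) * (y2 + t) - x2 * y1" for t
    unfolding d_def by (simp add: algebra_simps)
  have "p = 0"
  proof (rule ccontr)
    assume "p \<noteq> 0"
    moreover have "d \<noteq> 0"
      unfolding d_def by simp
    ultimately have "finite ({t. poly p t = 0} \<union> {t. poly d t = 0})"
      using poly_roots_finite by blast
    moreover have "poly p t = 0" if "poly d t \<noteq> 0" for t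
      using vanish[of "x1 + t" "y2 + t" x2 y1] that p d by auto
    then have "{t. poly p t = 0} \<union> {t. poly d t = 0} = UNIV"
      by blast
    ultimately show False
      using assms(1) by simp
  qed
  then show "F z = 0"
    using p[rule_format, of 0] z by simp
qed

lemma act1_torus_binary_form:
  "act1 (s, 0, 0, inverse s) (binary_form l a) = binary_form l (\<lambda>j. s ^ (l - j) * inverse s ^ j * a j)"
  by (simp add: act1_def vmul_def binary_form_def fun_eq_iff power_mult_distrib mult_ac split: prod.splits)

section \<open>\<open>G\<close>-maps and their value at the standard basis\<close>

lemma HomG_Ltens: "\<phi> \<in> HomG l m n \<Longrightarrow> f \<in> Lmod l \<Longrightarrow> \<phi> f \<in> Ltens m n"
  unfolding HomG_def by blast

lemma HomG_add:
  "\<phi> \<in> HomG l m n \<Longrightarrow> f \<in> Lmod l \<Longrightarrow> h \<in> Lmod l \<Longrightarrow> \<phi> (\<lambda>z. f z + h z) = (\<lambda>z. \<phi> f z + \<phi> h z)"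
  unfolding HomG_def by blast

lemma HomG_smult: "\<phi> \<in> HomG l m n \<Longrightarrow> f \<in> Lmod l \<Longrightarrow> \<phi> (\<lambda>z. c * f z) = (\<lambda>z. c * \<phi> f z)"
  unfolding HomG_def by blast

lemma HomG_act: "\<phi> \<in> HomG l m n \<Longrightarrow> g \<in> SL2 \<Longrightarrow> f \<in> Lmod l \<Longrightarrow> \<phi> (act1 g f) = act2 g (\<phi> f)"
  unfolding HomG_def by blast

lemma HomG_lincomb:
  assumes "\<phi> \<in> HomG l m n" "f \<in> Lmod l" "h \<in> Lmod l"
  shows "\<phi> (\<lambda>z. c * f z + h z) = (\<lambda>z. c * \<phi> f z + \<phi> h z)"
  using HomG_add[OF assms(1) Lmod_smult[OF assms(2)] assms(3)] HomG_smult[OF assms(1,2)] by simp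

lemma HomG_closed_lincomb:
  assumes "\<phi> \<in> HomG l m n" "\<psi> \<in> HomG l m n"
  shows "(\<lambda>f z. c * \<phi> f z + \<psi> f z) \<in> HomG l m n"
  using assms unfolding HomG_def Ltens_def
  by (auto intro!: kspan_add kspan_smult simp: act2_def fun_eq_iff algebra_simps)

lemma HomG_zero: "\<phi> \<in> HomG l m n \<Longrightarrow> \<phi> (\<lambda>z. 0) = (\<lambda>z. 0)"
  using HomG_smult[OF _ Lmod_zero, of \<phi> l m n 0] by simp

lemma HomG_eval_torus:
  fixes \<phi> :: "('k::field \<times> 'k \<Rightarrow> 'k) \<Rightarrow> ('k \<times> 'k) \<times> ('k \<times> 'k) \<Rightarrow> 'k"
  assumes "\<phi> \<in> HomG l m n" "h \<in> Lmod l" "s \<noteq> 0"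
  shows "\<phi> (act1 (s, 0, 0, inverse s) h) ((1, 0), (0, 1)) = s ^ m * inverse s ^ n * \<phi> h ((1, 0), (0, 1))"
proof -
  have "(s, 0, 0, inverse s) \<in> SL2"
    using assms(3) by (simp add: SL2_def)
  then have "\<phi> (act1 (s, 0, 0, inverse s) h) ((1, 0), (0, 1)) = \<phi> h ((s * 1, s * 0), (inverse s * 0, inverse s * 1))"
    by (simp add: HomG_act[OF assms(1) _ assms(2)] act2_def vmul_def)
  also have "\<dots> = s ^ m * inverse s ^ n * \<phi> h ((1, 0), (0, 1))"
    by (rule Ltens_bihomogeneous[OF HomG_Ltens[OF assms(1,2)]])
  finally show ?thesis .
qed

lemma HomG_eval_eq_0_off_weight:
  fixes \<phi> :: "('k::field \<times> 'k \<Rightarrow> 'k) \<Rightarrow> ('k \<times> 'k) \<times> ('k \<times> 'k) \<Rightarrow> 'k"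
  assumes inf: "infinite (UNIV :: 'k set)" and \<phi>: "\<phi> \<in> HomG l m n"
    and "finite J" "J \<subseteq> {..l}" "\<forall>j\<in>J. int l - 2 * int j \<noteq> int m - int n"
    and "h \<in> Lmod l" "h = binary_form l a" "\<forall>j\<le>l. j \<notin> J \<longrightarrow> a j = 0"
  shows "\<phi> h ((1, 0), (0, 1)) = 0"
  using assms(3-)
proof (induction J arbitrary: h a rule: finite_induct)
  case empty
  then have "h = (\<lambda>z. 0)"
    using binary_form_eq_0 by simp
  then show ?case
    using HomG_zero[OF \<phi>] by simp
next
  case (insert j1 J)
  have "j1 \<le> l" "int l - 2 * int j1 \<noteq> int m - int n"
    using insert.prems(1,2) by auto
  then have "m + j1 \<noteq> l - j1 + n"
    by linarith
  then obtain s :: 'k where s: "s \<noteq> 0" "s ^ (m + j1) \<noteq> s ^ (l - j1 + n)"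
    using ex_nonzero_power_neq[OF inf] by blast
  define w where "w j = s ^ (l - j) * inverse s ^ j" for j
  \<comment> \<open>The torus translate minus \<open>w j1\<close> times \<open>h\<close> loses the monomial \<open>j1\<close>, while the
    evaluation functional only gets scaled by \<open>s ^ m * inverse s ^ n - w j1 \<noteq> 0\<close>.\<close>
  define h' where "h' = (\<lambda>z. (- w j1) * h z + act1 (s, 0, 0, inverse s) h z)"
  have torus: "(s, 0, 0, inverse s) \<in> SL2"
    using s(1) by (simp add: SL2_def)
  have h': "h' \<in> Lmod l"
    unfolding h'_def
    by (intro Lmod_add Lmod_smult Lmod_act1[OF torus] insert.prems(3))
  have "h' = binary_form l (\<lambda>j. (- w j1) * a j + w j * a j)"
    unfolding h'_def insert.prems(4) act1_torus_binary_form binary_form_lincomb w_def ..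
  moreover have "\<forall>j\<le>l. j \<notin> J \<longrightarrow> (- w j1) * a j + w j * a j = 0"
    using insert.prems(5) by auto
  ultimately have "\<phi> h' ((1, 0), (0, 1)) = 0"
    using insert.IH[OF _ _ h'] insert.prems(1,2) by blast
  moreover have "\<phi> h' ((1, 0), (0, 1)) = (s ^ m * inverse s ^ n - w j1) * \<phi> h ((1, 0), (0, 1))"
    unfolding h'_def HomG_lincomb[OF \<phi> insert.prems(3) Lmod_act1[OF torus insert.prems(3)]]
      HomG_eval_torus[OF \<phi> insert.prems(3) s(1)]
    by (simp add: algebra_simps)
  moreover have "s ^ m * inverse s ^ n \<noteq> w j1"
  proof
    assume eq: "s ^ m * inverse s ^ n = w j1"
    have "s ^ m * inverse s ^ n * (s ^ n * s ^ j1) = s ^ (m + j1)"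
      using s(1) by (simp add: power_add field_simps)
    moreover have "w j1 * (s ^ n * s ^ j1) = s ^ (l - j1 + n)"
      using s(1) unfolding w_def by (simp add: power_add field_simps)
    ultimately show False
      using eq s(2) by simp
  qed
  ultimately show ?case
    by simp
qed

text \<open>The monomial \<open>x ^ (l - j) * y ^ j\<close> has torus weight \<open>l - 2 * j\<close>, so at most one
  coefficient has a given weight. Which representation \<open>SOME\<close> picks is irrelevant below.\<close>

definition weight_coeff :: "nat \<Rightarrow> int \<Rightarrow> ('k::field \<times> 'k \<Rightarrow> 'k) \<Rightarrow> 'k" where
  "weight_coeff l w h = (\<Sum>j | j \<le> l \<and> int l - 2 * int j = w. (SOME a. h = binary_form l a) j)"

lemma HomG_eval_eq_0_if_weight_coeff_0:
  fixes \<phi> :: "('k::field \<times> 'k \<Rightarrow> 'k) \<Rightarrow> ('k \<times> 'k) \<times> ('k \<times> 'k) \<Rightarrow> 'k"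
  assumes inf: "infinite (UNIV :: 'k set)" and \<phi>: "\<phi> \<in> HomG l m n"
    and h: "h \<in> Lmod l" "h = binary_form l b"
    and b: "(\<Sum>j | j \<le> l \<and> int l - 2 * int j = int m - int n. b j) = 0"
  shows "\<phi> h ((1, 0), (0, 1)) = 0"
proof (rule HomG_eval_eq_0_off_weight[OF inf \<phi> _ _ _ h])
  show "\<forall>j\<le>l. j \<notin> {j. j \<le> l \<and> int l - 2 * int j \<noteq> int m - int n} \<longrightarrow> b j = 0"
  proof (intro allI impI)
    fix j assume "j \<le> l" "j \<notin> {j. j \<le> l \<and> int l - 2 * int j \<noteq> int m - int n}"
    then have "{j'. j' \<le> l \<and> int l - 2 * int j' = int m - int n} = {j}"
      by auto
    then show "b j = 0"
      using b by simp
  qed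
qed auto

lemma weight_coeff_binary_form:
  assumes "h \<in> Lmod l"
  obtains a where "h = binary_form l a"
    and "weight_coeff l w h = (\<Sum>j | j \<le> l \<and> int l - 2 * int j = w. a j)"
proof -
  have "h = binary_form l (SOME a. h = binary_form l a)"
    using Lmod_binary_form[OF assms] by (rule someI_ex)
  then show ?thesis
    using that unfolding weight_coeff_def by blast
qed

lemma HomG_eval_proportional_weight_coeff:
  fixes \<phi> :: "('k::field \<times> 'k \<Rightarrow> 'k) \<Rightarrow> ('k \<times> 'k) \<times> ('k \<times> 'k) \<Rightarrow> 'k"
  assumes inf: "infinite (UNIV :: 'k set)" and \<phi>: "\<phi> \<in> HomG l m n"
  shows "\<exists>C. \<forall>h\<in>Lmod l. \<phi> h ((1, 0), (0, 1)) = C * weight_coeff l (int m - int n) h"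
proof (cases "\<exists>h0\<in>Lmod l. weight_coeff l (int m - int n) (h0 :: 'k \<times> 'k \<Rightarrow> 'k) \<noteq> 0")
  case True
  then obtain h0 :: "'k \<times> 'k \<Rightarrow> 'k" where h0: "h0 \<in> Lmod l" "weight_coeff l (int m - int n) h0 \<noteq> 0"
    by blast
  obtain a0 where a0: "h0 = binary_form l a0"
    "weight_coeff l (int m - int n) h0 = (\<Sum>j | j \<le> l \<and> int l - 2 * int j = int m - int n. a0 j)"
    using weight_coeff_binary_form[OF h0(1)] by blast
  show ?thesis
  proof (intro exI ballI)
    fix h :: "'k \<times> 'k \<Rightarrow> 'k" assume h: "h \<in> Lmod l"
    obtain a where a: "h = binary_form l a"
      "weight_coeff l (int m - int n) h = (\<Sum>j | j \<le> l \<and> int l - 2 * int j = int m - int n. a j)"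
      using weight_coeff_binary_form[OF h] by blast
    define k where "k = weight_coeff l (int m - int n) h / weight_coeff l (int m - int n) h0"
    have combination: "(\<lambda>z. (- k) * h0 z + h z) = binary_form l (\<lambda>j. (- k) * a0 j + a j)"
      unfolding a0(1) a(1) binary_form_lincomb ..
    have "(\<Sum>j | j \<le> l \<and> int l - 2 * int j = int m - int n. (- k) * a0 j + a j) =
        (- k) * weight_coeff l (int m - int n) h0 + weight_coeff l (int m - int n) h"
      unfolding a0(2) a(2) by (simp only: sum.distrib sum_distrib_left)
    also have "\<dots> = 0"
      using h0(2) by (simp add: k_def)
    finally have "\<phi> (\<lambda>z. (- k) * h0 z + h z) ((1, 0), (0, 1)) = 0"
      using combination
      by (intro HomG_eval_eq_0_if_weight_coeff_0[OF inf \<phi> Lmod_add[OF Lmod_smult[OF h0(1)] h]])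
    then show "\<phi> h ((1, 0), (0, 1)) =
        \<phi> h0 ((1, 0), (0, 1)) / weight_coeff l (int m - int n) h0 * weight_coeff l (int m - int n) h"
      using h0(2) unfolding HomG_lincomb[OF \<phi> h0(1) h] k_def by (simp add: field_simps)
  qed
next
  case False
  show ?thesis
  proof (intro exI[of _ 0] ballI)
    fix h :: "'k \<times> 'k \<Rightarrow> 'k" assume h: "h \<in> Lmod l"
    obtain a where a: "h = binary_form l a"
      "weight_coeff l (int m - int n) h = (\<Sum>j | j \<le> l \<and> int l - 2 * int j = int m - int n. a j)"
      using weight_coeff_binary_form[OF h] by blast
    show "\<phi> h ((1, 0), (0, 1)) = 0 * weight_coeff l (int m - int n) h"
      using HomG_eval_eq_0_if_weight_coeff_0[OF inf \<phi> h a(1)] False h a(2) by simp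
  qed
qed

lemma HomG_eval_via_SL2:
  fixes \<phi> :: "('k::field \<times> 'k \<Rightarrow> 'k) \<Rightarrow> ('k \<times> 'k) \<times> ('k \<times> 'k) \<Rightarrow> 'k"
  assumes \<phi>: "\<phi> \<in> HomG l m n" and f: "f \<in> Lmod l" and d: "x1 * y2 - x2 * y1 \<noteq> 0"
  defines "d \<equiv> x1 * y2 - x2 * y1"
  shows "(x1, x2, y1 / d, y2 / d) \<in> SL2"
    and "\<phi> f ((x1, x2), (y1, y2)) = d ^ n * \<phi> (act1 (x1, x2, y1 / d, y2 / d) f) ((1, 0), (0, 1))"
proof -
  have "x1 * (y2 / d) - x2 * (y1 / d) = 1"
    using d unfolding d_def by (simp add: diff_divide_distrib[symmetric])
  then show g: "(x1, x2, y1 / d, y2 / d) \<in> SL2"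
    unfolding SL2_def by simp
  have "\<phi> (act1 (x1, x2, y1 / d, y2 / d) f) ((1, 0), (0, 1)) = \<phi> f ((x1, x2), (y1 / d, y2 / d))"
    by (simp add: HomG_act[OF \<phi> g f] act2_def vmul_def)
  moreover have "\<phi> f ((1 * x1, 1 * x2), (d * (y1 / d), d * (y2 / d))) =
      1 ^ m * d ^ n * \<phi> f ((x1, x2), (y1 / d, y2 / d))"
    by (rule Ltens_bihomogeneous[OF HomG_Ltens[OF \<phi> f]])
  ultimately show "\<phi> f ((x1, x2), (y1, y2)) = d ^ n * \<phi> (act1 (x1, x2, y1 / d, y2 / d) f) ((1, 0), (0, 1))"
    using d unfolding d_def by simp
qed

lemma HomG_eq_0_if_eval_eq_0:
  fixes \<phi> :: "('k::field \<times> 'k \<Rightarrow> 'k) \<Rightarrow> ('k \<times> 'k) \<times> ('k \<times> 'k) \<Rightarrow> 'k"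
  assumes inf: "infinite (UNIV :: 'k set)" and \<phi>: "\<phi> \<in> HomG l m n"
    and eval: "\<forall>h\<in>Lmod l. \<phi> h ((1, 0), (0, 1)) = 0" and f: "f \<in> Lmod l"
  shows "\<phi> f = (\<lambda>_. 0)"
proof (rule Ltens_eq_0_if_vanishes_on_bases[OF inf HomG_Ltens[OF \<phi> f]])
  fix x1 x2 y1 y2 :: 'k
  assume d: "x1 * y2 - x2 * y1 \<noteq> 0"
  show "\<phi> f ((x1, x2), (y1, y2)) = 0"
    using HomG_eval_via_SL2[OF \<phi> f d] eval Lmod_act1[OF _ f] by simp
qed

lemma HomG_proportional:
  fixes \<phi> \<phi>1 :: "('k::field \<times> 'k \<Rightarrow> 'k) \<Rightarrow> ('k \<times> 'k) \<times> ('k \<times> 'k) \<Rightarrow> 'k"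
  assumes inf: "infinite (UNIV :: 'k set)" and \<phi>: "\<phi> \<in> HomG l m n" and \<phi>1: "\<phi>1 \<in> HomG l m n"
    and h1: "h1 \<in> Lmod l" "\<phi>1 h1 ((1, 0), (0, 1)) \<noteq> 0"
  shows "\<exists>c. \<forall>f\<in>Lmod l. \<phi> f = (\<lambda>z. c * \<phi>1 f z)"
proof -
  obtain C1 where C1: "\<forall>h\<in>Lmod l. \<phi>1 h ((1, 0), (0, 1)) = C1 * weight_coeff l (int m - int n) h"
    using HomG_eval_proportional_weight_coeff[OF inf \<phi>1] by blast
  obtain C where C: "\<forall>h\<in>Lmod l. \<phi> h ((1, 0), (0, 1)) = C * weight_coeff l (int m - int n) h"
    using HomG_eval_proportional_weight_coeff[OF inf \<phi>] by blast
  have "C1 \<noteq> 0"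
    using C1 h1 by auto
  let ?\<delta> = "\<lambda>f z. - (C / C1) * \<phi>1 f z + \<phi> f z"
  have "?\<delta> \<in> HomG l m n"
    by (rule HomG_closed_lincomb[OF \<phi>1 \<phi>])
  moreover have "\<forall>h\<in>Lmod l. ?\<delta> h ((1, 0), (0, 1)) = 0"
    using C C1 \<open>C1 \<noteq> 0\<close> by simp
  ultimately have "?\<delta> f = (\<lambda>_. 0)" if "f \<in> Lmod l" for f
    using HomG_eq_0_if_eval_eq_0[OF inf _ _ that] by blast
  then show ?thesis
    by (intro exI[of _ "C / C1"] ballI) (auto simp: fun_eq_iff dest!: fun_cong)
qed

theorem mainTheorem10:
  assumes "alg_closed TYPE('k::field)"
    and "pos_char TYPE('k)"
  shows "\<exists>\<phi>0. \<forall>\<phi>\<in>(HomG l m n :: (('k \<times> 'k \<Rightarrow> 'k) \<Rightarrow> _) set).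
           \<exists>c. \<forall>f\<in>Lmod l. \<phi> f = (\<lambda>z. c * \<phi>0 f z)"
proof -
  have inf: "infinite (UNIV :: 'k set)"
    using infinite_UNIV_if_alg_closed[OF assms(1)] .
  show ?thesis
  proof (cases "\<exists>\<phi>1\<in>(HomG l m n :: (('k \<times> 'k \<Rightarrow> 'k) \<Rightarrow> _) set). \<exists>h1\<in>Lmod l. \<phi>1 h1 ((1, 0), (0, 1)) \<noteq> 0")
    case True
    then obtain \<phi>1 :: "('k \<times> 'k \<Rightarrow> 'k) \<Rightarrow> _" and h1
      where "\<phi>1 \<in> HomG l m n" "h1 \<in> Lmod l" "\<phi>1 h1 ((1, 0), (0, 1)) \<noteq> 0"
      by blast
    then show ?thesis
      using HomG_proportional[OF inf] by blast
  next
    case False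
    then show ?thesis
      using HomG_eq_0_if_eval_eq_0[OF inf] by (intro exI[of _ "\<lambda>f z. 0"] ballI exI[of _ 0]) auto
  qed
qed

end
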